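(* Let $\mathbb{F}_q$ be the finite field with $q$ elements and characteristic $p$, let $m$ be a positive integer dividing $q-1$, let $H\subseteq\mathbb{F}_q^*$ be the multiplicative subgroup of index $m$, and let $k$ be an integer with $1\le k\le (q-1)/m$. Let $M_H(k,0)$ be the number of $k$-element subsets $S\subseteq H$ with $\sum_{a\in S}a=0$. Then $$\left|M_H(k,0)-\frac1q\binom{(q-1)/m}{k}\right|\le\binom{\sqrt q+k-1+\frac{q}{mp}}{k}.$$
   Context: For a real number $t$ and a nonnegative integer $k$, $\binom{t}{k}=\frac{t(t-1)\cdots(t-k+1)}{k!}$. *)

theory Defs
  imports Complex_Main "HOL-Library.Cardinality"
begin

definition subset_sum_count :: "'a::comm_monoid_add set \<Rightarrow> nat \<Rightarrow> 'a \<Rightarrow> nat" where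
  "subset_sum_count H k b = card {S. S \<subseteq> H \<and> card S = k \<and> (\<Sum>a\<in>S. a) = b}"

end

theory Submission
  imports Defs "HOL-Computational_Algebra.Formal_Power_Series" "HOL-Number_Theory.Cong"
begin

text \<open>
  For a nontrivial additive character \<open>\<psi>\<close> of \<open>\<FF>\<^sub>q\<close>, orthogonality gives
  \<open>q M\<^sub>H(k,0) = \<Sum>\<^sub>b e\<^sub>k(\<psi>(b a) : a \<in> H)\<close>, and the term \<open>b = 0\<close> is \<open>binom |H| k\<close>.
  For \<open>b \<noteq> 0\<close> the \<open>j\<close>-th power sum of the values \<open>\<psi>(b a)\<close> is the Gauss period
  \<open>\<Sum>\<^sub>a\<^sub>\<in>\<^sub>H \<psi>(j b a)\<close>: it equals \<open>|H|\<close> when \<open>p\<close> divides \<open>j\<close>, and otherwise has modulus at most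
  \<open>\<surd>q\<close>, by Parseval and the invariance of the period under \<open>H\<close>. Newton's identities
  then bound \<open>|e\<^sub>k|\<close> inductively by the coefficient \<open>binom (c + k - 1) k\<close> of \<open>(1 - X)\<^sup>-\<^sup>c\<close>,
  where \<open>c = \<surd>q + |H|/p\<close> because multiples of \<open>p\<close> occur with density \<open>1/p\<close>.
\<close>

unbundle fps_syntax

section \<open>Elementary symmetric functions and Newton's identities\<close>

lemma fps_const_prod: "(\<Prod>a\<in>A. fps_const (f a)) = fps_const (\<Prod>a\<in>A. f a)"
  by (induction A rule: infinite_finite_induct) simp_all

definition esym :: "('b \<Rightarrow> 'c::comm_ring_1) \<Rightarrow> 'b set \<Rightarrow> nat \<Rightarrow> 'c" where
  "esym x A k = (\<Sum>S | S \<subseteq> A \<and> card S = k. \<Prod>a\<in>S. x a)"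

definition psum :: "('b \<Rightarrow> 'c::comm_ring_1) \<Rightarrow> 'b set \<Rightarrow> nat \<Rightarrow> 'c" where
  "psum x A j = (\<Sum>a\<in>A. x a ^ j)"

lemma esym_0 [simp]: "finite A \<Longrightarrow> esym x A 0 = 1"
proof -
  assume "finite A"
  hence "{S. S \<subseteq> A \<and> card S = 0} = {{}}" by (auto dest: finite_subset)
  thus ?thesis by (simp add: esym_def)
qed

lemma prod_fps_linear_eq_esym:
  assumes "finite A"
  shows "(\<Prod>a\<in>A. fps_const (x a) * fps_X + 1) = Abs_fps (esym x A)"
proof (rule fps_ext)
  fix k
  have "(\<Prod>a\<in>A. fps_const (x a) * fps_X + 1)
      = (\<Sum>S\<in>Pow A. fps_const (\<Prod>a\<in>S. x a) * fps_X ^ card S)"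
    by (simp add: prod_add[OF assms] prod.distrib fps_const_prod)
  hence "(\<Prod>a\<in>A. fps_const (x a) * fps_X + 1) $ k
      = (\<Sum>S\<in>Pow A. if card S = k then \<Prod>a\<in>S. x a else 0)"
    by (auto simp: fps_sum_nth fps_X_power_nth intro!: sum.cong)
  also have "\<dots> = esym x A k"
    using assms by (simp add: esym_def sum.inter_filter[symmetric] Pow_def)
  finally show "(\<Prod>a\<in>A. fps_const (x a) * fps_X + 1) $ k = Abs_fps (esym x A) $ k" by simp
qed

lemma fps_deriv_prod_fps_linear:
  assumes "finite A"
  shows "fps_deriv (\<Prod>a\<in>A. fps_const (x a) * fps_X + 1)
       = (\<Prod>a\<in>A. fps_const (x a) * fps_X + 1) * Abs_fps (\<lambda>j. (- 1) ^ j * psum x A (Suc j))"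
  using assms
proof (induction A rule: finite_induct)
  case empty
  show ?case by (simp add: psum_def fps_eq_iff)
next
  case (insert b A)
  define L where "L = fps_const (x b) * fps_X + 1"
  define P where "P = (\<Prod>a\<in>A. fps_const (x a) * fps_X + 1)"
  define D where "D A = Abs_fps (\<lambda>j. (- 1) ^ j * psum x A (Suc j))" for A
  \<comment> \<open>\<open>D {b}\<close> is the logarithmic derivative \<open>x b / (1 + x b X)\<close> of \<open>L\<close>.\<close>
  have Lb: "L * D {b} = fps_const (x b)"
  proof (rule fps_ext)
    fix n show "(L * D {b}) $ n = fps_const (x b) $ n"
      by (cases n) (simp_all add: L_def D_def psum_def algebra_simps)
  qed
  have "fps_deriv (L * P) = fps_const (x b) * P + L * (P * D A)"
    using insert.IH by (simp add: fps_deriv_mult L_def P_def D_def)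
  also have "\<dots> = (L * P) * (D A + D {b})"
    unfolding Lb[symmetric] by (simp add: algebra_simps)
  also have "D A + D {b} = D (insert b A)"
    using insert by (simp add: D_def psum_def fps_eq_iff algebra_simps)
  finally have "fps_deriv (L * P) = (L * P) * D (insert b A)" .
  thus ?case using insert by (simp add: L_def P_def D_def)
qed

theorem newton_identity:
  assumes "finite A"
  shows "of_nat k * esym x A k = (\<Sum>i<k. (- 1) ^ (k - Suc i) * esym x A i * psum x A (k - i))"
proof (cases k)
  case (Suc m)
  have "of_nat k * esym x A k = fps_deriv (Abs_fps (esym x A)) $ m" using Suc by simp
  also have "\<dots> = (Abs_fps (esym x A) * Abs_fps (\<lambda>j. (- 1) ^ j * psum x A (Suc j))) $ m"
    using fps_deriv_prod_fps_linear[OF assms, of x] by (simp add: prod_fps_linear_eq_esym[OF assms])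
  also have "\<dots> = (\<Sum>i\<le>m. esym x A i * ((- 1) ^ (m - i) * psum x A (Suc (m - i))))"
    by (simp add: fps_mult_nth atLeast0AtMost)
  also have "\<dots> = (\<Sum>i<k. (- 1) ^ (k - Suc i) * esym x A i * psum x A (k - i))"
    using Suc by (intro sum.cong) (auto simp: Suc_diff_le lessThan_Suc_atMost)
  finally show ?thesis .
qed simp

lemma norm_esym_le_majorant:
  fixes x :: "'b \<Rightarrow> 'c::real_normed_field" and F U :: "nat \<Rightarrow> real"
  assumes A: "finite A" and F0: "1 \<le> F 0"
    and psum_le: "\<And>j. j \<ge> 1 \<Longrightarrow> norm (psum x A j) \<le> U j"
    and F_rec: "\<And>k. k \<ge> 1 \<Longrightarrow> (\<Sum>i<k. F i * U (k - i)) \<le> real k * F k"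
  shows "norm (esym x A k) \<le> F k"
proof (induction k rule: less_induct)
  case (less k)
  show ?case
  proof (cases "k = 0")
    case True thus ?thesis using A F0 by simp
  next
    case False
    have "real k * norm (esym x A k) = norm (of_nat k * esym x A k)"
      by (simp add: norm_mult)
    also have "\<dots> \<le> (\<Sum>i<k. norm (esym x A i) * norm (psum x A (k - i)))"
      unfolding newton_identity[OF A] by (rule norm_sum[THEN order_trans]) (simp add: norm_mult norm_power)
    also have "\<dots> \<le> (\<Sum>i<k. F i * U (k - i))"
      using less psum_le by (intro sum_mono mult_mono) (auto intro: order_trans[OF norm_ge_zero])
    also have "\<dots> \<le> real k * F k" using False F_rec by simp
    finally show ?thesis using False by simp
  qed
qed

section \<open>A majorant for the Newton recursion\<close>

lemma sum_dvd_diff_le_sum: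
  fixes F :: "nat \<Rightarrow> real"
  assumes F: "mono F" "\<And>i. 0 \<le> F i" and p: "p \<ge> 1"
  shows "real p * (\<Sum>i<k. if p dvd (k - i) then F i else 0) \<le> (\<Sum>i<k. F i)"
proof (induction k rule: less_induct)
  case (less k)
  define G where "G k i = (if p dvd (k - i) then F i else 0)" for k i
  show ?case
  proof (cases "k < p")
    case True
    have "G k i = 0" if "i < k" for i
      using True that by (auto simp: G_def dest: dvd_imp_le)
    thus ?thesis using F by (simp add: G_def[symmetric] sum_nonneg)
  next
    case False
    define k' where "k' = k - p"
    have k: "k = k' + p" using False by (simp add: k'_def)
    have split: "(\<Sum>i<k. f i) = (\<Sum>i<k'. f i) + (\<Sum>i=k'..<k. f i)" for f :: "nat \<Rightarrow> real"
      using sum.atLeastLessThan_concat[of 0 k' k f] k by (simp add: atLeast0LessThan)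
    have "G k i = G k' i" if "i < k'" for i
    proof -
      have "k - i = (k' - i) + p" using k that by simp
      thus ?thesis by (simp add: G_def)
    qed
    hence "(\<Sum>i<k'. G k i) = (\<Sum>i<k'. G k' i)" by simp
    moreover have "(\<Sum>i=k'..<k. G k i) = F k'"
    proof -
      have "G k i = (if i = k' then F i else 0)" if "i \<in> {k'..<k}" for i
        using that k by (auto simp: G_def dest: dvd_imp_le)
      thus ?thesis using k p by (simp add: sum.delta')
    qed
    moreover have "real p * F k' \<le> (\<Sum>i=k'..<k. F i)"
      using sum_mono[of "{k'..<k}" "\<lambda>_. F k'" F] F(1) k by (simp add: mono_def)
    moreover have "real p * (\<Sum>i<k'. G k' i) \<le> (\<Sum>i<k'. F i)"
      using less[of k'] p k by (simp add: G_def)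
    ultimately show ?thesis unfolding G_def[symmetric] split[of F] split[of "G k"]
      by (simp add: distrib_left)
  qed
qed

definition multichoose :: "real \<Rightarrow> nat \<Rightarrow> real" where
  "multichoose c k = pochhammer c k / fact k"

lemma multichoose_0 [simp]: "multichoose c 0 = 1"
  by (simp add: multichoose_def)

lemma multichoose_Suc: "multichoose c (Suc k) = multichoose c k * (c + k) / (k + 1)"
  by (simp add: multichoose_def pochhammer_Suc field_simps)

lemma multichoose_nonneg: "c \<ge> 0 \<Longrightarrow> multichoose c k \<ge> 0"
  unfolding multichoose_def pochhammer_prod by (intro divide_nonneg_pos prod_nonneg) auto

lemma multichoose_eq_gbinomial: "multichoose c k = (c + k - 1) gchoose k"
  by (simp add: multichoose_def gbinomial_pochhammer')

lemma mono_multichoose: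
  assumes "c \<ge> 1" shows "mono (multichoose c)"
  unfolding mono_iff_le_Suc
proof
  fix k
  have "multichoose c k * 1 \<le> multichoose c k * ((c + k) / (k + 1))"
    using assms by (intro mult_left_mono multichoose_nonneg) auto
  thus "multichoose c k \<le> multichoose c (Suc k)" by (simp add: multichoose_Suc)
qed

lemma multichoose_recurrence: "real k * multichoose c k = c * (\<Sum>i<k. multichoose c i)"
proof (induction k)
  case (Suc k)
  have "real (Suc k) * multichoose c (Suc k) = c * multichoose c k + real k * multichoose c k"
    by (simp add: multichoose_Suc field_simps)
  thus ?case using Suc by (simp add: algebra_simps)
qed simp

lemma multichoose_majorant_recurrence:
  fixes s t c :: real and p :: nat
  assumes "s \<ge> 0" "t \<ge> 0" "p \<ge> 1" and c: "c = s + t / p" "c \<ge> 1"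
  shows "(\<Sum>i<k. multichoose c i * (s + (if p dvd (k - i) then t else 0))) \<le> real k * multichoose c k"
proof -
  define G where "G = (\<Sum>i<k. if p dvd (k - i) then multichoose c i else 0)"
  have "real p * G \<le> (\<Sum>i<k. multichoose c i)"
    unfolding G_def using assms by (intro sum_dvd_diff_le_sum mono_multichoose multichoose_nonneg) auto
  hence "t / p * (real p * G) \<le> t / p * (\<Sum>i<k. multichoose c i)"
    using assms by (intro mult_left_mono) auto
  hence tG: "t * G \<le> t / p * (\<Sum>i<k. multichoose c i)" using assms by simp
  have "(\<Sum>i<k. multichoose c i * (s + (if p dvd (k - i) then t else 0)))
      = (\<Sum>i<k. s * multichoose c i + t * (if p dvd (k - i) then multichoose c i else 0))"
    by (intro sum.cong) (simp_all add: algebra_simps)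
  also have "\<dots> = s * (\<Sum>i<k. multichoose c i) + t * G"
    by (simp add: G_def sum.distrib sum_distrib_left)
  also have "\<dots> \<le> c * (\<Sum>i<k. multichoose c i)"
    using tG c by (simp add: algebra_simps)
  also have "\<dots> = real k * multichoose c k" by (simp add: multichoose_recurrence)
  finally show ?thesis .
qed

section \<open>Additive characters of a finite field\<close>

definition add_subgroup :: "'a::ab_group_add set \<Rightarrow> bool" where
  "add_subgroup V \<longleftrightarrow> 0 \<in> V \<and> (\<forall>x\<in>V. \<forall>y\<in>V. x - y \<in> V)"

lemma add_subgroup_add:
  assumes "add_subgroup V" "x \<in> V" "y \<in> V" shows "x + y \<in> V"
proof -
  have "0 - y \<in> V" using assms unfolding add_subgroup_def by blast
  hence "x - (0 - y) \<in> V" using assms unfolding add_subgroup_def by blast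
  thus ?thesis by simp
qed

lemma add_subgroup_of_int_mult:
  fixes V :: "'a::ring_1 set"
  assumes V: "add_subgroup V" and v: "v \<in> V"
  shows "of_int j * v \<in> V"
proof -
  have nat: "of_nat n * v \<in> V" for n
    by (induction n) (use V v in \<open>auto simp: add_subgroup_def distrib_right add_subgroup_add\<close>)
  show ?thesis
  proof (cases j rule: int_cases)
    case (nonneg n) thus ?thesis using nat by simp
  next
    case (neg n)
    have "0 - of_nat (Suc n) * v \<in> V" using V nat unfolding add_subgroup_def by blast
    also have "0 - of_nat (Suc n) * v = of_int j * v"
      by (simp only: neg of_int_minus of_int_of_nat_eq minus_mult_left diff_0)
    finally show ?thesis .
  qed
qed

lemma of_int_inverse_CHAR:
  assumes "prime CHAR('a::ring_1)" and "of_int j \<noteq> (0::'a)"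
  shows "\<exists>j'. of_int j' * of_int j = (1::'a)"
proof -
  have "prime (int CHAR('a))" using assms(1) by simp
  moreover have "\<not> int CHAR('a) dvd j" using assms(2) by (simp add: of_int_eq_0_iff_char_dvd)
  ultimately have "coprime j (int CHAR('a))" by (metis coprime_commute prime_imp_coprime)
  then obtain j' where "[j' * j = 1] (mod int CHAR('a))"
    using cong_solve_coprime_int by (metis mult.commute)
  hence "of_int (j' * j) = (of_int 1 :: 'a)" by (simp only: of_int_eq_iff_cong_CHAR)
  thus ?thesis by (intro exI[of _ j']) (simp only: of_int_mult of_int_1)
qed

lemma prime_CHAR: "prime CHAR('a::{field,finite})"
  by (simp add: finite_imp_CHAR_pos prime_CHAR_semidom)

lemma add_subgroup_extend:
  fixes V :: "'a::{field,finite} set"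
  assumes V: "add_subgroup V" and V1: "1 \<notin> V" and x: "\<not> (\<exists>v\<in>V. \<exists>j. x = v + of_int j)"
  shows "\<exists>W. add_subgroup W \<and> 1 \<notin> W \<and> V \<subset> W"
proof (intro exI conjI)
  define W where "W = {v + of_int j * x | v j. v \<in> V}"
  show "add_subgroup W"
    unfolding add_subgroup_def W_def
  proof safe
    show "\<exists>v j. (0::'a) = v + of_int j * x \<and> v \<in> V"
      using V by (intro exI[of _ 0]) (auto simp: add_subgroup_def)
    fix v j v' j' assume "v \<in> V" "v' \<in> V"
    hence "v - v' \<in> V" using V by (simp add: add_subgroup_def)
    moreover have "v + of_int j * x - (v' + of_int j' * x) = (v - v') + of_int (j - j') * x"
      by (simp add: algebra_simps)
    ultimately show "\<exists>w i. v + of_int j * x - (v' + of_int j' * x) = w + of_int i * x \<and> w \<in> V"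
      by blast
  qed
  show "1 \<notin> W"
  proof
    assume "1 \<in> W"
    then obtain v j where v: "v \<in> V" and one: "1 = v + of_int j * x" unfolding W_def by blast
    have "of_int j \<noteq> (0::'a)" using one v V1 by auto
    then obtain j' where j': "of_int j' * of_int j = (1::'a)"
      using of_int_inverse_CHAR[OF prime_CHAR] by blast
    have "1 - v = of_int j * x" using one by (metis add_diff_cancel_left')
    hence "x = of_int j' * (1 - v)" by (simp add: j' flip: mult.assoc)
    also have "\<dots> = of_int (- j') * v + of_int j'" by (simp add: algebra_simps)
    finally show False using x add_subgroup_of_int_mult[OF V v] by blast
  qed
  show "V \<subset> W"
  proof
    show "V \<subseteq> W"
    proof
      fix y assume "y \<in> V"
      thus "y \<in> W" unfolding W_def by (intro CollectI exI[of _ y] exI[of _ 0]) simp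
    qed
    have "x \<in> W" using V unfolding W_def add_subgroup_def by (intro CollectI exI[of _ 0] exI[of _ 1]) auto
    moreover have "x \<notin> V" using x by (metis add.right_neutral of_int_0)
    ultimately show "V \<noteq> W" by blast
  qed
qed

lemma exists_add_subgroup_complement:
  "\<exists>V::'a::{field,finite} set. add_subgroup V \<and> 1 \<notin> V \<and> (\<forall>x. \<exists>v\<in>V. \<exists>j. x = v + of_int j)"
proof -
  define P where "P V \<longleftrightarrow> add_subgroup V \<and> (1::'a) \<notin> V" for V
  have "P {0}" by (simp add: P_def add_subgroup_def)
  moreover have "\<forall>V. P V \<longrightarrow> card V < Suc CARD('a)"
    by (simp add: card_mono le_imp_less_Suc)
  ultimately obtain V where "P V" and max: "\<And>W. P W \<Longrightarrow> card W \<le> card V"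
    using ex_has_greatest_nat[of P "{0}" card] by blast
  hence V: "add_subgroup V" and V1: "1 \<notin> V" by (auto simp: P_def)
  have "\<exists>v\<in>V. \<exists>j. x = v + of_int j" for x
  proof (rule ccontr)
    assume "\<not> (\<exists>v\<in>V. \<exists>j. x = v + of_int j)"
    from add_subgroup_extend[OF V V1 this] obtain W where "P W" "V \<subset> W"
      by (auto simp: P_def)
    thus False using max[of W] psubset_card_mono[of W V] by simp
  qed
  thus ?thesis using V V1 by blast
qed

lemma add_subgroup_complement_unique:
  fixes V :: "'a::{field,finite} set"
  assumes V: "add_subgroup V" and V1: "1 \<notin> V" and "v \<in> V" "v' \<in> V"
    and eq: "v + of_int j = v' + of_int j'"
  shows "[j = j'] (mod int CHAR('a))"
proof -
  have diff: "of_int (j - j') = v' - v" using eq by (simp add: algebra_simps)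
  hence "of_int (j - j') \<in> V" using V assms(3,4) by (simp add: add_subgroup_def)
  moreover have "of_int (j - j') = (0::'a)"
  proof (rule ccontr)
    assume "of_int (j - j') \<noteq> (0::'a)"
    then obtain i where "of_int i * of_int (j - j') = (1::'a)"
      using of_int_inverse_CHAR[OF prime_CHAR] by blast
    thus False using V1 add_subgroup_of_int_mult[OF V \<open>of_int (j - j') \<in> V\<close>, of i] by simp
  qed
  ultimately show ?thesis by (simp add: of_int_eq_iff_cong_CHAR)
qed

locale add_char =
  fixes \<psi> :: "'a::ring_1 \<Rightarrow> complex"
  assumes add: "\<psi> (x + y) = \<psi> x * \<psi> y"
    and norm_eq_1: "norm (\<psi> x) = 1"
begin

lemma zero [simp]: "\<psi> 0 = 1"
proof -
  have "\<psi> 0 * \<psi> 0 = \<psi> 0 * 1" using add[of 0 0] by simp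
  moreover have "\<psi> 0 \<noteq> 0" using norm_eq_1[of 0] by auto
  ultimately show ?thesis by (metis mult_cancel_left)
qed

lemma sum_eq_prod: "\<psi> (\<Sum>a\<in>S. f a) = (\<Prod>a\<in>S. \<psi> (f a))"
  by (induction S rule: infinite_finite_induct) (simp_all add: add)

lemma power: "\<psi> x ^ n = \<psi> (of_nat n * x)"
  by (induction n) (simp_all add: add distrib_right)

lemma minus_eq_cnj: "\<psi> (- x) = cnj (\<psi> x)"
proof -
  have "\<psi> x * \<psi> (- x) = 1" using add[of x "- x"] by simp
  moreover have "\<psi> x * cnj (\<psi> x) = 1"
    using complex_norm_square[of "\<psi> x"] norm_eq_1[of x] by simp
  moreover have "\<psi> x \<noteq> 0" using norm_eq_1[of x] by auto
  ultimately show ?thesis by (metis mult_left_cancel)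
qed

end

locale nontrivial_add_char = add_char \<psi> for \<psi> :: "'a::{field,finite} \<Rightarrow> complex" +
  assumes nontrivial: "\<psi> 1 \<noteq> 1"
begin

lemma sum_UNIV: "(\<Sum>y\<in>UNIV. \<psi> y) = 0"
proof -
  have "(\<Sum>y\<in>UNIV. \<psi> y) = (\<Sum>y\<in>UNIV. \<psi> (y + 1))"
    by (rule sum.reindex_bij_witness[of _ "\<lambda>y. y + 1" "\<lambda>y. y - 1"]) auto
  also have "\<dots> = (\<Sum>y\<in>UNIV. \<psi> y) * \<psi> 1" by (simp add: add sum_distrib_right)
  finally have "(\<Sum>y\<in>UNIV. \<psi> y) * (\<psi> 1 - 1) = 0" by (simp add: algebra_simps)
  thus ?thesis using nontrivial by simp
qed

lemma sum_mult_UNIV: "(\<Sum>b\<in>UNIV. \<psi> (b * x)) = (if x = 0 then of_nat CARD('a) else 0)"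
proof (cases "x = 0")
  case False
  have "(\<Sum>b\<in>UNIV. \<psi> (b * x)) = (\<Sum>y\<in>UNIV. \<psi> y)"
    by (rule sum.reindex_bij_witness[of _ "\<lambda>y. y / x" "\<lambda>b. b * x"]) (use False in auto)
  thus ?thesis using sum_UNIV False by simp
qed simp

end

lemma exists_nontrivial_add_char: "\<exists>\<psi>::'a::{field,finite} \<Rightarrow> complex. nontrivial_add_char \<psi>"
proof -
  define p where "p = CHAR('a)"
  have p: "p \<ge> 2" using prime_CHAR[where 'a='a] unfolding p_def by (simp add: prime_ge_2_nat)
  define \<chi> :: "int \<Rightarrow> complex" where "\<chi> j = cis (2 * pi * of_int j / p)" for j
  have \<chi>_add: "\<chi> (i + j) = \<chi> i * \<chi> j" for i j
    by (simp add: \<chi>_def cis_mult add_divide_distrib distrib_left)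
  have \<chi>_cong: "\<chi> i = \<chi> j" if ij: "[i = j] (mod int p)" for i j
  proof -
    obtain t where "j = i + int p * t" using ij by (auto simp: cong_iff_lin)
    hence "2 * pi * of_int j / p = 2 * pi * of_int i / p + 2 * pi * of_int t"
      using p by (simp add: field_simps)
    hence "\<chi> j = \<chi> i * cis (2 * pi * of_int t)" by (simp only: \<chi>_def cis_mult)
    thus ?thesis by simp
  qed
  have "inj_on (\<lambda>k. cis (2 * pi * real k / real p)) {..<p}"
    using p by (intro bij_betw_imp_inj_on[OF bij_betw_roots_unity]) simp
  from inj_on_contraD[OF this, of 1 0] p have "\<chi> 1 \<noteq> \<chi> 0" by (simp add: \<chi>_def)
  \<comment> \<open>\<open>V\<close> complements the prime field, and \<open>\<psi> (v + j) = exp (2\<pi>i j / p)\<close>.\<close>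
  obtain V :: "'a set" where V: "add_subgroup V" and V1: "1 \<notin> V"
    and decomp: "\<And>x. \<exists>v\<in>V. \<exists>j. x = v + of_int j"
    using exists_add_subgroup_complement by blast
  define \<psi> where "\<psi> x = \<chi> (SOME j. \<exists>v\<in>V. x = v + of_int j)" for x
  have \<psi>_eq: "\<psi> (v + of_int j) = \<chi> j" if "v \<in> V" for v j
  proof -
    have "\<exists>j'. \<exists>v'\<in>V. v + of_int j = v' + of_int j'" using that by blast
    from someI_ex[OF this] obtain v' where "v' \<in> V"
      "v + of_int j = v' + of_int (SOME j'. \<exists>v'\<in>V. v + of_int j = v' + of_int j')" by blast
    hence "[j = (SOME j'. \<exists>v'\<in>V. v + of_int j = v' + of_int j')] (mod int p)"
      using add_subgroup_complement_unique[OF V V1 that] unfolding p_def by blast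
    thus ?thesis unfolding \<psi>_def using \<chi>_cong by metis
  qed
  have "nontrivial_add_char \<psi>"
  proof
    fix x y :: 'a
    obtain v i where v: "v \<in> V" "x = v + of_int i" using decomp by blast
    obtain w j where w: "w \<in> V" "y = w + of_int j" using decomp by blast
    have "x + y = (v + w) + of_int (i + j)" using v w by (simp add: algebra_simps)
    moreover have "v + w \<in> V" using V v w by (simp add: add_subgroup_add)
    ultimately show "\<psi> (x + y) = \<psi> x * \<psi> y" using v w \<psi>_eq \<chi>_add by metis
    show "norm (\<psi> x) = 1" by (simp add: \<psi>_def \<chi>_def)
    have "\<psi> 1 = \<chi> 1" using \<psi>_eq[of 0 1] V by (simp add: add_subgroup_def)
    moreover have "\<chi> 0 = 1" by (simp add: \<chi>_def)
    ultimately show "\<psi> 1 \<noteq> 1" using \<open>\<chi> 1 \<noteq> \<chi> 0\<close> by simp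
  qed
  thus ?thesis by blast
qed

section \<open>Gauss periods and subset sums\<close>

context nontrivial_add_char
begin

lemma sum_norm_power2_UNIV:
  "(\<Sum>d\<in>UNIV. (norm (\<Sum>a\<in>A. \<psi> (d * a)))\<^sup>2) = real CARD('a) * real (card A)"
proof -
  have "complex_of_real ((norm (\<Sum>a\<in>A. \<psi> (d * a)))\<^sup>2) = (\<Sum>a\<in>A. \<Sum>a'\<in>A. \<psi> (d * (a - a')))" for d
  proof -
    have "complex_of_real ((norm (\<Sum>a\<in>A. \<psi> (d * a)))\<^sup>2)
        = (\<Sum>a\<in>A. \<psi> (d * a)) * (\<Sum>a'\<in>A. \<psi> (- (d * a')))"
      by (simp only: complex_norm_square cnj_sum minus_eq_cnj)
    also have "\<dots> = (\<Sum>a\<in>A. \<Sum>a'\<in>A. \<psi> (d * (a - a')))"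
      by (simp add: sum_product add[symmetric] right_diff_distrib)
    finally show ?thesis .
  qed
  hence "complex_of_real (\<Sum>d\<in>UNIV. (norm (\<Sum>a\<in>A. \<psi> (d * a)))\<^sup>2)
      = (\<Sum>a\<in>A. \<Sum>a'\<in>A. \<Sum>d\<in>UNIV. \<psi> (d * (a - a')))"
    by (simp add: sum.swap[of _ UNIV])
  also have "\<dots> = (\<Sum>a\<in>A. of_nat CARD('a))"
    by (simp add: sum_mult_UNIV sum.delta)
  also have "\<dots> = complex_of_real (real CARD('a) * real (card A))" by simp
  finally show ?thesis by (simp only: of_real_eq_iff)
qed

lemma norm_gauss_period_le:
  assumes H0: "0 \<notin> H" and H_mult: "\<And>x y. x \<in> H \<Longrightarrow> y \<in> H \<Longrightarrow> x * y \<in> H"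
    and H_inv: "\<And>x. x \<in> H \<Longrightarrow> inverse x \<in> H" and c: "c \<noteq> 0"
  shows "norm (\<Sum>a\<in>H. \<psi> (c * a)) \<le> sqrt CARD('a)"
proof -
  define S where "S d = (\<Sum>a\<in>H. \<psi> (d * a))" for d
  \<comment> \<open>\<open>S\<close> is constant on the coset \<open>c H\<close>, whose \<open>|H|\<close> elements all occur in the Parseval sum.\<close>
  have S_coset: "S (c * h) = S c" if h: "h \<in> H" for h
  proof -
    have "h \<noteq> 0" using h H0 by auto
    thus ?thesis unfolding S_def using h H_mult H_inv
      by (intro sum.reindex_bij_witness[of _ "\<lambda>a. inverse h * a" "\<lambda>a. h * a"]) (auto simp: mult.assoc)
  qed
  have "real (card H) * (norm (S c))\<^sup>2 = (\<Sum>h\<in>H. (norm (S (c * h)))\<^sup>2)"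
    by (simp add: S_coset)
  also have "\<dots> = (\<Sum>d\<in>(*) c ` H. (norm (S d))\<^sup>2)"
    using c by (simp add: sum.reindex inj_on_def)
  also have "\<dots> \<le> (\<Sum>d\<in>UNIV. (norm (S d))\<^sup>2)"
    by (intro sum_mono2) auto
  also have "\<dots> = real (card H) * CARD('a)"
    by (simp add: S_def sum_norm_power2_UNIV)
  finally have "real (card H) * (norm (S c))\<^sup>2 \<le> real (card H) * CARD('a)" .
  hence "H \<noteq> {} \<Longrightarrow> norm (S c) \<le> sqrt CARD('a)"
    by (intro real_le_rsqrt) (simp add: card_gt_0_iff)
  thus ?thesis by (cases "H = {}") (simp_all add: S_def)
qed

lemma norm_esym_le_multichoose:
  assumes H0: "0 \<notin> H" and H_mult: "\<And>x y. x \<in> H \<Longrightarrow> y \<in> H \<Longrightarrow> x * y \<in> H"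
    and H_inv: "\<And>x. x \<in> H \<Longrightarrow> inverse x \<in> H" and b: "b \<noteq> 0"
  shows "norm (esym (\<lambda>a. \<psi> (b * a)) H k)
           \<le> multichoose (sqrt CARD('a) + card H / CHAR('a)) k"
proof (rule norm_esym_le_majorant)
  define p where "p = CHAR('a)"
  define U where "U j = sqrt CARD('a) + (if p dvd j then real (card H) else 0)" for j
  have p: "p \<ge> 1" using prime_gt_0_nat[OF prime_CHAR[where 'a='a]] by (simp add: p_def)
  show "finite H" by simp
  show "1 \<le> multichoose (sqrt CARD('a) + card H / CHAR('a)) 0" by simp
  show "norm (psum (\<lambda>a. \<psi> (b * a)) H j) \<le> U j" for j
  proof -
    have psum: "psum (\<lambda>a. \<psi> (b * a)) H j = (\<Sum>a\<in>H. \<psi> ((of_nat j * b) * a))"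
      by (simp add: psum_def power mult.assoc)
    show ?thesis
    proof (cases "p dvd j")
      case True
      hence "of_nat j = (0::'a)" by (simp add: p_def of_nat_eq_0_iff_char_dvd)
      thus ?thesis using True by (simp add: psum U_def)
    next
      case False
      hence "of_nat j * b \<noteq> 0" using b by (simp add: p_def of_nat_eq_0_iff_char_dvd)
      thus ?thesis using False norm_gauss_period_le[OF H0 H_mult H_inv] by (simp add: psum U_def)
    qed
  qed
  show "(\<Sum>i<k. multichoose (sqrt CARD('a) + card H / CHAR('a)) i * U (k - i))
          \<le> real k * multichoose (sqrt CARD('a) + card H / CHAR('a)) k" for k
    unfolding U_def p_def
    by (rule multichoose_majorant_recurrence) (use p in \<open>auto simp: p_def add_increasing2\<close>)
qed

lemma card_times_subset_sum_count:
  "of_nat CARD('a) * of_nat (subset_sum_count H k 0) = (\<Sum>b\<in>UNIV. esym (\<lambda>a. \<psi> (b * a)) H k)"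
proof -
  define Sk where "Sk = {S. S \<subseteq> H \<and> card S = k}"
  have "of_nat (subset_sum_count H k 0) = (\<Sum>S\<in>Sk. if (\<Sum>a\<in>S. a) = 0 then 1 else 0 :: complex)"
  proof -
    have "{S. S \<subseteq> H \<and> card S = k \<and> (\<Sum>a\<in>S. a) = 0} = {S\<in>Sk. (\<Sum>a\<in>S. a) = 0}"
      by (auto simp: Sk_def)
    thus ?thesis by (simp add: subset_sum_count_def sum.inter_filter[symmetric])
  qed
  hence "of_nat CARD('a) * of_nat (subset_sum_count H k 0)
      = (\<Sum>S\<in>Sk. of_nat CARD('a) * (if (\<Sum>a\<in>S. a) = 0 then 1 else 0) :: complex)"
    by (simp add: sum_distrib_left)
  also have "\<dots> = (\<Sum>S\<in>Sk. \<Sum>b\<in>UNIV. \<psi> (b * (\<Sum>a\<in>S. a)))"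
    by (intro sum.cong) (simp_all add: sum_mult_UNIV)
  also have "\<dots> = (\<Sum>b\<in>UNIV. \<Sum>S\<in>Sk. \<Prod>a\<in>S. \<psi> (b * a))"
    by (simp add: sum.swap[of _ Sk] sum_distrib_left sum_eq_prod)
  finally show ?thesis by (simp add: esym_def Sk_def)
qed

theorem subset_sum_count_deviation:
  fixes H :: "'a set"
  assumes H0: "0 \<notin> H" and H_mult: "\<And>x y. x \<in> H \<Longrightarrow> y \<in> H \<Longrightarrow> x * y \<in> H"
    and H_inv: "\<And>x. x \<in> H \<Longrightarrow> inverse x \<in> H"
  shows "\<bar>real (subset_sum_count H k 0) - real (card H choose k) / CARD('a)\<bar>
           \<le> multichoose (sqrt CARD('a) + card H / CHAR('a)) k"
proof -
  define q where "q = CARD('a)"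
  define M where "M = subset_sum_count H k 0"
  define C where "C = card H choose k"
  define F where "F = multichoose (sqrt q + card H / CHAR('a)) k"
  define E where "E b = esym (\<lambda>a. \<psi> (b * a)) H k" for b
  have "E 0 = of_nat C"
    by (simp add: E_def C_def esym_def n_subsets)
  hence "of_nat q * of_nat M = of_nat C + (\<Sum>b\<in>UNIV - {0}. E b)"
    by (simp add: q_def M_def card_times_subset_sum_count E_def[symmetric] sum.remove[of UNIV 0])
  hence sum_E: "(\<Sum>b\<in>UNIV - {0}. E b) = of_real (real q * real M - real C)" by simp
  have "real q * \<bar>real M - real C / q\<bar> = \<bar>real q * (real M - real C / q)\<bar>"
    by (simp add: abs_mult)
  also have "\<dots> = norm (\<Sum>b\<in>UNIV - {0}. E b)"
    by (simp only: sum_E norm_of_real) (simp add: q_def right_diff_distrib)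
  also have "\<dots> \<le> (\<Sum>b\<in>UNIV - {0::'a}. F)"
    using norm_esym_le_multichoose[OF H0 H_mult H_inv]
    by (intro sum_norm_le) (simp add: E_def F_def q_def)
  also have "\<dots> \<le> real q * F"
    by (simp add: q_def F_def card_Diff_singleton multichoose_nonneg mult_right_mono)
  finally show ?thesis by (simp add: q_def M_def C_def F_def)
qed

end

theorem mainTheorem11:
  fixes H :: "'a::{field, finite} set" and m k :: nat
  assumes m_pos: "m > 0"
    and m_dvd: "m dvd (CARD('a) - 1)"
    and H_sub: "H \<subseteq> UNIV - {0}"
    and H_one: "1 \<in> H"
    and H_mult: "\<And>x y. x \<in> H \<Longrightarrow> y \<in> H \<Longrightarrow> x * y \<in> H"
    and H_inv: "\<And>x. x \<in> H \<Longrightarrow> inverse x \<in> H"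
    and H_index: "m * card H = CARD('a) - 1"
    and k_ge: "1 \<le> k" and k_le: "k \<le> (CARD('a) - 1) div m"
  shows "\<bar>real (subset_sum_count H k 0)
            - (1 / real CARD('a)) * real (((CARD('a) - 1) div m) choose k)\<bar>
         \<le> (sqrt (real CARD('a)) + real k - 1
              + real CARD('a) / (real m * real CHAR('a))) gchoose k"
proof -
  obtain \<psi> :: "'a \<Rightarrow> complex" where "nontrivial_add_char \<psi>"
    using exists_nontrivial_add_char by blast
  then interpret nontrivial_add_char \<psi> .
  define q where "q = CARD('a)"
  have q: "q \<ge> 1" by (simp add: q_def Suc_leI)
  have n: "(q - 1) div m = card H" unfolding q_def H_index[symmetric] using m_pos by simp
  have "real (card H) * m \<le> q" using H_index by (simp add: q_def mult.commute flip: of_nat_mult)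
  hence "card H / CHAR('a) \<le> q / (m * CHAR('a))"
    using m_pos prime_gt_0_nat[OF prime_CHAR[where 'a='a]] by (simp add: field_simps)
  moreover have "1 \<le> sqrt q" using q by simp
  moreover have "0 \<le> card H / CHAR('a)" by simp
  ultimately have "multichoose (sqrt q + card H / CHAR('a)) k
      \<le> (sqrt q + k - 1 + q / (m * CHAR('a))) gchoose k"
    unfolding multichoose_eq_gbinomial by (intro gbinomial_mono) linarith+
  moreover have "0 \<notin> H" using H_sub by blast
  ultimately have "\<bar>real (subset_sum_count H k 0) - real (card H choose k) / q\<bar>
      \<le> (sqrt q + k - 1 + q / (m * CHAR('a))) gchoose k"
    using subset_sum_count_deviation[OF _ H_mult H_inv] by (fastforce simp: q_def intro: order_trans)
  thus ?thesis using n by (simp add: q_def)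
qed

end
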